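(* For $w\in(0,\infty)$ let $$Q_{0,w}(x)=s_*\frac{w}{3+w}\frac{1}{r^3}\Big(e_r\otimes e_r-\tfrac13I\Big)+s_*\Big(1-\frac{w}{1+w}\frac1r\Big)\Big(e_z\otimes e_z-\tfrac13I\Big),\quad r=|x|>1,$$ and let $U_w=\{x\in\Omega\setminus\mathbb Re_z: Q_{0,w}(x)\text{ is uniaxial}\}$, where $\Omega=\{|x|>1\}$. If $w>\sqrt3$, then $$U_w=\{(x_1,x_2,0):x_1^2+x_2^2=r_w^2\},$$ where $r_w$ is the unique solution $r>1$ of $r^3-\frac{w}{1+w}r^2-\frac{w}{3+w}=0$. The function $w\mapsto r_w$ is increasing on $(\sqrt3,\infty)$, with $r_w\to1$ as $w\downarrow\sqrt3$ and $r_w\to r_\infty$ as $w\to\infty$, where $r_\infty>1$ is the root of $r^3-r^2-1=0$ ($r_\infty\approx1.47$). If $w\le\sqrt3$, then $U_w=\emptyset$.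
   Context: $s_*>0$ is a fixed constant, $e_r=x/|x|$, $e_z=(0,0,1)$. A matrix $Q\in\mathcal S_0$ (real symmetric traceless $3\times 3$) is uniaxial if it has two equal eigenvalues. *)

theory Defs
  imports "HOL-Analysis.Analysis" "HOL-Computational_Algebra.Polynomial"
begin

definition ez :: "real^3" where "ez = axis 3 1"

definition outer :: "real^3 \<Rightarrow> real^3 \<Rightarrow> real^3^3" where
  "outer u v = (\<chi> i j. u$i * v$j)"

definition Id3 :: "real^3^3" where "Id3 = mat 1"

definition uniaxial :: "real^3^3 \<Rightarrow> bool" where
  "uniaxial Q \<longleftrightarrow> (\<exists>p lam. p \<noteq> 0 \<and> (\<forall>t. poly p t = det (t *\<^sub>R Id3 - Q)) \<and> order lam p \<ge> 2)"

definition Q0 :: "real \<Rightarrow> real \<Rightarrow> real^3 \<Rightarrow> real^3^3" where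
  "Q0 s w x = (let r = norm x; er = (1 / r) *\<^sub>R x in
     (s * (w / (3 + w)) * (1 / r^3)) *\<^sub>R (outer er er - (1/3) *\<^sub>R Id3)
     + (s * (1 - (w / (1 + w)) * (1 / r))) *\<^sub>R (outer ez ez - (1/3) *\<^sub>R Id3))"

definition Omega :: "(real^3) set" where "Omega = {x. norm x > 1}"

definition U :: "real \<Rightarrow> real \<Rightarrow> (real^3) set" where
  "U s w = {x \<in> Omega - range (\<lambda>t. t *\<^sub>R ez). uniaxial (Q0 s w x)}"

definition rw :: "real \<Rightarrow> real" where
  "rw w = (THE r. r > 1 \<and> r^3 - (w / (1 + w)) * r^2 - w / (3 + w) = 0)"

definition rinf :: real where
  "rinf = (THE r. r > 1 \<and> r^3 - r^2 - 1 = 0)"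

end

theory Submission
  imports Defs "HOL-Real_Asymp.Real_Asymp"
begin

text \<open>
  With \<open>r = |x|\<close> and \<open>e = x/r\<close>, the tensor is \<open>a (e \<otimes> e - I/3) + b (e\<^sub>z \<otimes> e\<^sub>z - I/3)\<close> with
  \<open>a = s\<^sub>* w/((3+w) r\<^sup>3) > 0\<close> and \<open>b = s\<^sub>* (1 - w/((1+w) r)) > 0\<close>. Shifted by \<open>(a+b)/3\<close>, its
  characteristic polynomial is \<open>u (u\<^sup>2 - (a+b) u + a b (e\<^sub>1\<^sup>2 + e\<^sub>2\<^sup>2))\<close>. Off the axis the root \<open>0\<close> is
  simple and the quadratic factor has discriminant \<open>(a-b)\<^sup>2 + 4 a b e\<^sub>3\<^sup>2\<close>, so the tensor is uniaxial
  exactly when \<open>e\<^sub>3 = 0\<close> and \<open>a = b\<close>, i.e. \<open>r\<^sup>3 - \<alpha> r\<^sup>2 - \<beta> = 0\<close> with \<open>\<alpha> = w/(1+w)\<close>, \<open>\<beta> = w/(3+w)\<close>.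
  For \<open>\<alpha> \<le> 1\<close> the map \<open>r \<mapsto> r\<^sup>3 - \<alpha> r\<^sup>2\<close> grows at least with slope 1 on \<open>[1,\<infinity>)\<close>, so a root
  \<open>r > 1\<close> exists, and is then unique, iff \<open>\<alpha> + \<beta> > 1\<close>, which here means \<open>w\<^sup>2 > 3\<close>. The same slope
  bound compares roots for different coefficients, which gives the monotonicity of \<open>r\<^sub>w\<close> and
  both of its limits.
\<close>

lemma order_ge_2_iff:
  fixes p :: "'a::field_char_0 poly"
  assumes "p \<noteq> 0"
  shows "2 \<le> order a p \<longleftrightarrow> poly p a = 0 \<and> poly (pderiv p) a = 0"
proof (cases "poly p a = 0")
  case True
  have "pderiv p \<noteq> 0"
    using True assms pderiv_iszero by fastforce
  then show ?thesis
    using order_pderiv[OF assms True] order_root[of "pderiv p" a] True by auto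
next
  case False
  then show ?thesis using order_root[of p a] by auto
qed

lemma uniaxial_iff_double_root:
  assumes "c \<noteq> 0" and charpoly: "\<And>t. det (t *\<^sub>R Id3 - Q) = poly c (t + k)"
  shows "uniaxial Q \<longleftrightarrow> (\<exists>u. poly c u = 0 \<and> poly (pderiv c) u = 0)"
proof -
  define p where "p = pcompose c [:k, 1:]"
  have "p \<noteq> 0"
    using assms(1) pcompose_eq_0_iff[of "[:k, 1:]" c] unfolding p_def by simp
  have poly_p: "poly p t = poly c (t + k)" for t
    by (simp add: p_def poly_pcompose add.commute)
  have pderiv_p: "poly (pderiv p) t = poly (pderiv c) (t + k)" for t
    by (simp add: p_def pderiv_pcompose poly_pcompose pderiv_pCons add.commute)
  have "uniaxial Q \<longleftrightarrow> (\<exists>lam. 2 \<le> order lam p)"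
  proof
    assume "uniaxial Q"
    then obtain p' lam where "\<forall>t. poly p' t = det (t *\<^sub>R Id3 - Q)" "2 \<le> order lam p'"
      unfolding uniaxial_def by blast
    moreover from this(1) have "poly p' = poly p"
      by (auto simp: poly_p charpoly)
    then have "p' = p"
      by (simp add: poly_eq_poly_eq_iff)
    ultimately show "\<exists>lam. 2 \<le> order lam p" by blast
  next
    assume "\<exists>lam. 2 \<le> order lam p"
    moreover have "\<forall>t. poly p t = det (t *\<^sub>R Id3 - Q)"
      by (simp add: poly_p charpoly)
    ultimately show "uniaxial Q"
      unfolding uniaxial_def using \<open>p \<noteq> 0\<close> by blast
  qed
  also have "\<dots> \<longleftrightarrow> (\<exists>lam. poly c (lam + k) = 0 \<and> poly (pderiv c) (lam + k) = 0)"
    using order_ge_2_iff[OF \<open>p \<noteq> 0\<close>] by (simp add: poly_p pderiv_p)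
  also have "\<dots> \<longleftrightarrow> (\<exists>u. poly c u = 0 \<and> poly (pderiv c) u = 0)"
  proof
    assume "\<exists>u. poly c u = 0 \<and> poly (pderiv c) u = 0"
    then obtain u where "poly c u = 0 \<and> poly (pderiv c) u = 0" ..
    then show "\<exists>lam. poly c (lam + k) = 0 \<and> poly (pderiv c) (lam + k) = 0"
      by (intro exI[of _ "u - k"]) simp
  qed blast
  finally show ?thesis .
qed

lemma det_two_directors:
  fixes a b t :: real and e :: "real^3"
  assumes e: "e$1^2 + e$2^2 + e$3^2 = 1"
  shows "det (t *\<^sub>R Id3 - (a *\<^sub>R (outer e e - (1/3) *\<^sub>R Id3) + b *\<^sub>R (outer ez ez - (1/3) *\<^sub>R Id3)))
     = poly [:0, a*b*(e$1^2+e$2^2), -(a+b), 1:] (t + (a+b)/3)"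
proof -
  have charpoly: "det (t *\<^sub>R Id3 - (a *\<^sub>R (outer e e - (1/3) *\<^sub>R Id3) + b *\<^sub>R (outer ez ez - (1/3) *\<^sub>R Id3)))
     = poly [:0, a*b*(x^2+y^2), -(a*(x^2+y^2+z^2)+b), 1:] (t + (a+b)/3)"
    if "e = vector [x, y, z]" for x y z
    \<comment> \<open>on plain variables \<open>field_simps\<close> normalises the expanded determinant quickly\<close>
    unfolding that det_3 Id3_def outer_def ez_def
    by (simp add: axis_def mat_def) (simp add: power2_eq_square field_simps)
  have "e = vector [e$1, e$2, e$3]"
    by (simp add: vec_eq_iff forall_3)
  from charpoly[OF this] show ?thesis
    using e by simp
qed

lemma cubic_double_root_iff:
  fixes a b \<rho> :: real
  assumes "0 < a" "0 < b" "0 < \<rho>" "\<rho> \<le> 1"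
  shows "(\<exists>u. poly [:0, a*b*\<rho>, -(a+b), 1:] u = 0 \<and> poly (pderiv [:0, a*b*\<rho>, -(a+b), 1:]) u = 0)
    \<longleftrightarrow> a = b \<and> \<rho> = 1"
proof
  assume "\<exists>u. poly [:0, a*b*\<rho>, -(a+b), 1:] u = 0 \<and> poly (pderiv [:0, a*b*\<rho>, -(a+b), 1:]) u = 0"
  then obtain u where root: "u * (u^2 - (a+b)*u + a*b*\<rho>) = 0"
    and deriv: "3*u^2 - 2*(a+b)*u + a*b*\<rho> = 0"
    by (auto simp: pderiv_pCons power2_eq_square algebra_simps)
  have "u \<noteq> 0" using deriv assms by auto
  then have quadratic: "u^2 - (a+b)*u + a*b*\<rho> = 0" using root by simp
  with deriv have "u * (2*u - (a+b)) = 0" by (simp add: power2_eq_square algebra_simps)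
  with \<open>u \<noteq> 0\<close> have "u = (a+b)/2" by simp
  with quadratic have "(a-b)^2 + 4*a*b*(1-\<rho>) = 0"
    by (simp add: power2_eq_square field_simps)
  moreover have "0 \<le> 4*a*b*(1-\<rho>)" using assms by simp
  ultimately have "(a-b)^2 = 0" and "4*a*b*(1-\<rho>) = 0"
    using zero_le_power2[of "a-b"] by linarith+
  then show "a = b \<and> \<rho> = 1"
    using assms by simp
next
  assume "a = b \<and> \<rho> = 1"
  then show "\<exists>u. poly [:0, a*b*\<rho>, -(a+b), 1:] u = 0 \<and> poly (pderiv [:0, a*b*\<rho>, -(a+b), 1:]) u = 0"
    by (intro exI[of _ a]) (simp add: pderiv_pCons algebra_simps power2_eq_square)
qed

lemma uniaxial_two_directors_iff:
  fixes a b :: real and e :: "real^3"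
  assumes e: "e$1^2 + e$2^2 + e$3^2 = 1" and "0 < a" "0 < b" "0 < e$1^2 + e$2^2"
  shows "uniaxial (a *\<^sub>R (outer e e - (1/3) *\<^sub>R Id3) + b *\<^sub>R (outer ez ez - (1/3) *\<^sub>R Id3))
    \<longleftrightarrow> a = b \<and> e$3 = 0"
proof -
  let ?c = "[:0, a*b*(e$1^2+e$2^2), -(a+b), 1:]"
  have "uniaxial (a *\<^sub>R (outer e e - (1/3) *\<^sub>R Id3) + b *\<^sub>R (outer ez ez - (1/3) *\<^sub>R Id3))
      \<longleftrightarrow> (\<exists>u. poly ?c u = 0 \<and> poly (pderiv ?c) u = 0)"
    by (rule uniaxial_iff_double_root) (simp_all add: det_two_directors[OF e])
  also have "\<dots> \<longleftrightarrow> a = b \<and> e$1^2 + e$2^2 = 1"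
    using assms zero_le_power2[of "e$3"] by (intro cubic_double_root_iff) linarith+
  also have "e$1^2 + e$2^2 = 1 \<longleftrightarrow> e$3 = 0"
    using e by auto
  finally show ?thesis .
qed

lemma norm_vec3_power2: "norm x ^ 2 = x$1^2 + x$2^2 + x$3^2" for x :: "real^3"
  unfolding power2_norm_eq_inner inner_vec_def sum_3 by (simp add: power2_eq_square)

lemma on_ez_axis_iff: "x \<in> range (\<lambda>t. t *\<^sub>R ez) \<longleftrightarrow> x$1 = 0 \<and> x$2 = 0"
proof
  assume "x \<in> range (\<lambda>t. t *\<^sub>R ez)"
  then show "x$1 = 0 \<and> x$2 = 0" by (auto simp: ez_def axis_def)
next
  assume "x$1 = 0 \<and> x$2 = 0"
  then have "x = (x$3) *\<^sub>R ez" by (simp add: vec_eq_iff forall_3 ez_def axis_def)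
  then show "x \<in> range (\<lambda>t. t *\<^sub>R ez)" by blast
qed

lemma uniaxial_Q0_iff:
  assumes "0 < s" "0 < w" "1 < norm x" "x$1 \<noteq> 0 \<or> x$2 \<noteq> 0"
  shows "uniaxial (Q0 s w x) \<longleftrightarrow> x$3 = 0 \<and> norm x^3 - (w/(1+w))*norm x^2 - w/(3+w) = 0"
proof -
  define r where "r = norm x"
  define e where "e = (1/r) *\<^sub>R x"
  define a where "a = s * (w/(3+w)) * (1/r^3)"
  define b where "b = s * (1 - (w/(1+w)) * (1/r))"
  have "1 < r" using assms(3) by (simp add: r_def)
  have e_comp: "e$i = x$i / r" for i by (simp add: e_def)
  have "x$1^2 + x$2^2 + x$3^2 = r^2" using norm_vec3_power2[of x] by (simp add: r_def)
  then have e_unit: "e$1^2 + e$2^2 + e$3^2 = 1"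
    using \<open>1 < r\<close> by (simp add: e_comp power_divide add_divide_distrib[symmetric])
  have "0 < x$1^2 + x$2^2" using assms(4) by (auto intro: add_pos_nonneg add_nonneg_pos)
  then have e_off_axis: "0 < e$1^2 + e$2^2"
    using \<open>1 < r\<close> by (simp add: e_comp power_divide add_divide_distrib[symmetric])
  have "0 < a" using assms(1,2) \<open>1 < r\<close> by (simp add: a_def)
  have "w/(1+w) * (1/r) \<le> w/(1+w) * 1" using assms(2) \<open>1 < r\<close> by (intro mult_left_mono) auto
  also have "\<dots> < 1" using assms(2) by simp
  finally have "0 < b" using assms(1) by (simp add: b_def)
  have "r \<noteq> 0" using \<open>1 < r\<close> by simp
  then have "a * r^3 = s * (w/(3+w))" "b * r^3 = s * (r^3 - (w/(1+w))*r^2)"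
    by (simp_all add: a_def b_def right_diff_distrib left_diff_distrib power2_eq_square power3_eq_cube)
  then have "a = b \<longleftrightarrow> s * (w/(3+w)) = s * (r^3 - (w/(1+w))*r^2)"
    using \<open>r \<noteq> 0\<close> by (metis mult_cancel_right power_not_zero)
  also have "\<dots> \<longleftrightarrow> r^3 - (w/(1+w))*r^2 - w/(3+w) = 0"
    using assms(1) by (simp only: mult_cancel_left) auto
  finally have "a = b \<longleftrightarrow> r^3 - (w/(1+w))*r^2 - w/(3+w) = 0" .
  moreover have "e$3 = 0 \<longleftrightarrow> x$3 = 0" using \<open>1 < r\<close> by (simp add: e_comp)
  moreover have "Q0 s w x = a *\<^sub>R (outer e e - (1/3) *\<^sub>R Id3) + b *\<^sub>R (outer ez ez - (1/3) *\<^sub>R Id3)"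
    unfolding Q0_def Let_def a_def b_def e_def r_def ..
  ultimately show ?thesis
    using uniaxial_two_directors_iff[OF e_unit \<open>0 < a\<close> \<open>0 < b\<close> e_off_axis] by (simp add: r_def [symmetric] conj_commute)
qed

lemma mem_U_iff:
  assumes "0 < s" "0 < w"
  shows "x \<in> U s w \<longleftrightarrow> 1 < norm x \<and> x$3 = 0 \<and> norm x^3 - (w/(1+w))*norm x^2 - w/(3+w) = 0"
proof -
  have "x$1 \<noteq> 0 \<or> x$2 \<noteq> 0" if "1 < norm x" "x$3 = 0"
    using that norm_vec3_power2[of x] by auto
  then show ?thesis
    unfolding U_def Omega_def using uniaxial_Q0_iff[OF assms] on_ez_axis_iff[of x] by auto
qed

lemma cubic_increment_ge:
  fixes \<alpha> x y :: real
  assumes "\<alpha> \<le> 1" "1 \<le> x" "x \<le> y"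
  shows "y - x \<le> (y^3 - \<alpha>*y^2) - (x^3 - \<alpha>*x^2)"
proof -
  define K where "K = y^2 + y*x + x^2 - \<alpha>*(y + x)"
  have diff: "(y^3 - \<alpha>*y^2) - (x^3 - \<alpha>*x^2) = (y - x) * K"
    unfolding K_def by (simp add: power2_eq_square power3_eq_cube algebra_simps)
  have "\<alpha>*(y + x) \<le> y + x" using assms by (simp add: mult_left_le_one_le)
  moreover have "y \<le> y^2" "x \<le> x^2"
    using assms by (auto simp: power2_eq_square)
  moreover have "1*1 \<le> y*x"
    using assms by (intro mult_mono) auto
  ultimately have "1 \<le> K" unfolding K_def by linarith
  then have "(y - x) * 1 \<le> (y - x) * K" using assms by (intro mult_left_mono) auto
  then show ?thesis using diff by simp
qed

lemma cubic_less_iff: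
  fixes \<alpha> x y :: real
  assumes "\<alpha> \<le> 1" "1 \<le> x" "1 \<le> y"
  shows "x^3 - \<alpha>*x^2 < y^3 - \<alpha>*y^2 \<longleftrightarrow> x < y"
  using cubic_increment_ge[OF assms(1,2), of y] cubic_increment_ge[OF assms(1,3), of x]
  by (cases "x < y") auto

lemma cubic_root_le_coeff_sum:
  fixes \<alpha> \<beta> r :: real
  assumes "\<alpha> \<le> 1" "1 \<le> r" "r^3 - \<alpha>*r^2 - \<beta> = 0"
  shows "r \<le> \<alpha> + \<beta>"
  using cubic_increment_ge[OF assms(1) order_refl assms(2)] assms(3) by simp

lemma cubic_root_gt_1_iff:
  fixes \<alpha> \<beta> :: real
  assumes "\<alpha> \<le> 1"
  shows "(\<exists>r>1. r^3 - \<alpha>*r^2 - \<beta> = 0) \<longleftrightarrow> 1 < \<alpha> + \<beta>"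
proof
  assume "\<exists>r>1. r^3 - \<alpha>*r^2 - \<beta> = 0"
  then obtain r where "1 < r" "r^3 - \<alpha>*r^2 - \<beta> = 0" by blast
  then show "1 < \<alpha> + \<beta>"
    using cubic_root_le_coeff_sum[OF assms, of r \<beta>] by linarith
next
  assume sum: "1 < \<alpha> + \<beta>"
  have "(\<alpha> + \<beta>)^3 - \<alpha>*(\<alpha> + \<beta>)^2 - \<beta> \<ge> 0"
    using cubic_increment_ge[OF assms order_refl, of "\<alpha> + \<beta>"] sum by simp
  then obtain r where r: "1 \<le> r" "r \<le> \<alpha> + \<beta>" "r^3 - \<alpha>*r^2 - \<beta> = 0"
    using sum IVT[of "\<lambda>r. r^3 - \<alpha>*r^2 - \<beta>" 1 0 "\<alpha> + \<beta>"] by (auto intro: continuous_intros)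
  moreover have "r \<noteq> 1" using r sum by auto
  ultimately show "\<exists>r>1. r^3 - \<alpha>*r^2 - \<beta> = 0" by force
qed

lemma cubic_root_gt_1_unique:
  fixes \<alpha> \<beta> :: real
  assumes "\<alpha> \<le> 1" "1 < \<alpha> + \<beta>"
  shows "\<exists>!r. r > 1 \<and> r^3 - \<alpha>*r^2 - \<beta> = 0"
proof (rule ex_ex1I)
  show "\<exists>r. r > 1 \<and> r^3 - \<alpha>*r^2 - \<beta> = 0" using cubic_root_gt_1_iff[OF assms(1)] assms(2) by auto
next
  fix x y assume "x > 1 \<and> x^3 - \<alpha>*x^2 - \<beta> = 0" "y > 1 \<and> y^3 - \<alpha>*y^2 - \<beta> = 0"
  then show "x = y" using cubic_less_iff[OF assms(1), of x y] cubic_less_iff[OF assms(1), of y x] by force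
qed

lemma cubic_root_less:
  fixes \<alpha> \<alpha>' \<beta> \<beta>' x y :: real
  assumes "\<alpha> \<le> \<alpha>'" "\<alpha>' \<le> 1" "\<beta> < \<beta>'" "1 \<le> x" "1 \<le> y"
    and "x^3 - \<alpha>*x^2 - \<beta> = 0" "y^3 - \<alpha>'*y^2 - \<beta>' = 0"
  shows "x < y"
proof -
  have "\<alpha>*x^2 \<le> \<alpha>'*x^2" using assms(1) by (simp add: mult_right_mono)
  then have "x^3 - \<alpha>'*x^2 < y^3 - \<alpha>'*y^2" using assms(3,6,7) by linarith
  then show ?thesis using cubic_less_iff[OF assms(2,4,5)] by simp
qed

lemma cubic_root_perturb:
  fixes \<alpha> \<alpha>' \<beta> \<beta>' x y :: real
  assumes "\<alpha> \<le> \<alpha>'" "\<alpha>' \<le> 1" "\<beta> \<le> \<beta>'" "1 \<le> x" "1 \<le> y"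
    and "x^3 - \<alpha>*x^2 - \<beta> = 0" "y^3 - \<alpha>'*y^2 - \<beta>' = 0"
  shows "y - x \<le> (\<alpha>' - \<alpha>)*y^2 + (\<beta>' - \<beta>)"
proof (cases "x \<le> y")
  case True
  then have "x^2 \<le> y^2" using assms(4) by (simp add: power_mono)
  then have "(\<alpha>' - \<alpha>)*x^2 \<le> (\<alpha>' - \<alpha>)*y^2" using assms(1) by (simp add: mult_left_mono)
  then show ?thesis
    using cubic_increment_ge[OF assms(2,4) True] assms(6,7) by (simp add: algebra_simps)
next
  case False
  have "0 \<le> (\<alpha>' - \<alpha>)*y^2 + (\<beta>' - \<beta>)" using assms(1,3) by simp
  then show ?thesis using False by linarith
qed

lemma one_minus_coeff_sum:
  fixes w :: real
  assumes "0 < w"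
  shows "1 - w/(1+w) - w/(3+w) = (3 - w^2) / ((1+w)*(3+w))"
  using assms by (simp add: field_simps power2_eq_square)

lemma coeff_sum_gt_1_iff:
  fixes w :: real
  assumes "0 < w"
  shows "1 < w/(1+w) + w/(3+w) \<longleftrightarrow> sqrt 3 < w"
proof -
  have "sqrt 3 < w \<longleftrightarrow> 3 < w^2"
    using real_sqrt_less_iff[of 3 "w^2"] assms by simp
  moreover have "1 < w/(1+w) + w/(3+w) \<longleftrightarrow> (3 - w^2) / ((1+w)*(3+w)) < 0"
    using one_minus_coeff_sum[OF assms] by linarith
  moreover have "0 < (1+w)*(3+w)" using assms by simp
  ultimately show ?thesis by (simp add: divide_less_0_iff)
qed

lemma strict_mono_on_divide_add:
  fixes c :: real
  assumes "0 < c"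
  shows "strict_mono_on {0..} (\<lambda>w. w/(c+w))"
proof (rule strict_mono_onI)
  fix w w' :: real
  assume "w \<in> {0..}" "w' \<in> {0..}" "w < w'"
  then have "w*(c+w') < w'*(c+w)" using assms by (simp add: algebra_simps)
  moreover have "0 < c+w" "0 < c+w'" using \<open>w \<in> {0..}\<close> \<open>w' \<in> {0..}\<close> assms by auto
  ultimately show "w/(c+w) < w'/(c+w')" by (simp add: field_simps)
qed

lemma sqrt_3_less_imp_pos: "sqrt 3 < w \<Longrightarrow> (0::real) < w"
  using real_sqrt_ge_zero[of 3] by linarith

lemma rw_ex1:
  assumes "sqrt 3 < w"
  shows "\<exists>!r. r > 1 \<and> r^3 - (w/(1+w))*r^2 - w/(3+w) = 0"
  using assms sqrt_3_less_imp_pos[OF assms] coeff_sum_gt_1_iff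
  by (intro cubic_root_gt_1_unique) auto

lemma rw_root:
  assumes "sqrt 3 < w"
  shows "1 < rw w \<and> (rw w)^3 - (w/(1+w))*(rw w)^2 - w/(3+w) = 0"
  unfolding rw_def by (rule theI'[OF rw_ex1[OF assms]])

lemma rw_eqI:
  assumes "sqrt 3 < w" "1 < r" "r^3 - (w/(1+w))*r^2 - w/(3+w) = 0"
  shows "rw w = r"
  using rw_ex1 rw_root assms by blast

lemma strict_mono_on_rw: "strict_mono_on {sqrt 3<..} rw"
proof (rule strict_mono_onI)
  fix w w' :: real
  assume "w \<in> {sqrt 3<..}" "w' \<in> {sqrt 3<..}" "w < w'"
  then have w: "sqrt 3 < w" and w': "sqrt 3 < w'" and "0 \<le> w" "0 \<le> w'"
    using sqrt_3_less_imp_pos by force+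
  have "w/(1+w) < w'/(1+w')" "w/(3+w) < w'/(3+w')"
    using strict_mono_on_divide_add[of 1] strict_mono_on_divide_add[of 3] \<open>w < w'\<close> \<open>0 \<le> w\<close> \<open>0 \<le> w'\<close>
    by (auto simp: strict_mono_on_def)
  moreover have "w'/(1+w') \<le> 1" using \<open>0 \<le> w'\<close> by simp
  ultimately show "rw w < rw w'"
    using rw_root[OF w] rw_root[OF w'] cubic_root_less[of "w/(1+w)" "w'/(1+w')" "w/(3+w)" "w'/(3+w')" "rw w" "rw w'"]
    by simp
qed

lemma rw_tendsto_1: "(rw \<longlongrightarrow> 1) (at_right (sqrt 3))"
proof (rule tendsto_sandwich[where f = "\<lambda>_. 1" and h = "\<lambda>w. w/(1+w) + w/(3+w)"])
  have near: "eventually (\<lambda>w. sqrt 3 < w) (at_right (sqrt 3))"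
    by (rule eventually_at_right_less)
  show "eventually (\<lambda>w. 1 \<le> rw w) (at_right (sqrt 3))"
    using near by eventually_elim (use rw_root in force)
  show "eventually (\<lambda>w. rw w \<le> w/(1+w) + w/(3+w)) (at_right (sqrt 3))"
    using near
  proof eventually_elim
    case (elim w)
    have "w/(1+w) \<le> 1" using sqrt_3_less_imp_pos[OF elim] by simp
    then show ?case using rw_root[OF elim] cubic_root_le_coeff_sum[of "w/(1+w)" "rw w" "w/(3+w)"] by simp
  qed
  have "0 < sqrt (3::real)" by simp
  then have "sqrt 3/(1 + sqrt 3) + sqrt 3/(3 + sqrt 3) = (1::real)"
    using one_minus_coeff_sum[of "sqrt 3"] by simp
  moreover have "((\<lambda>w. w/(1+w) + w/(3+w)) \<longlongrightarrow> sqrt 3/(1 + sqrt 3) + sqrt 3/(3 + sqrt 3)) (at_right (sqrt 3))"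
    using \<open>0 < sqrt 3\<close> by (intro tendsto_intros) linarith+
  ultimately show "((\<lambda>w. w/(1+w) + w/(3+w)) \<longlongrightarrow> 1) (at_right (sqrt 3))" by simp
qed simp

lemma rinf_ex1: "\<exists>!r::real. r > 1 \<and> r^3 - r^2 - 1 = 0"
  using cubic_root_gt_1_unique[of 1 1] by simp

lemma rinf_root: "1 < rinf \<and> rinf^3 - rinf^2 - 1 = 0"
  unfolding rinf_def by (rule theI'[OF rinf_ex1])

lemma rinf_bounds: "1.465 < rinf \<and> rinf < 1.475"
proof -
  have "(1.465::real)^3 - 1.465^2 < rinf^3 - rinf^2" "rinf^3 - rinf^2 < (1.475::real)^3 - 1.475^2"
    using rinf_root by (simp_all add: power2_eq_square power3_eq_cube)
  then show ?thesis
    using rinf_root cubic_less_iff[of 1 "1.465" rinf] cubic_less_iff[of 1 rinf "1.475"] by simp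
qed

lemma rw_tendsto_rinf: "(rw \<longlongrightarrow> rinf) at_top"
proof (rule tendsto_sandwich[where f = "\<lambda>w. rinf - ((1 - w/(1+w))*rinf^2 + (1 - w/(3+w)))"
      and h = "\<lambda>_. rinf"])
  have large: "eventually (\<lambda>w. sqrt 3 < w) at_top"
    by (rule eventually_gt_at_top)
  show "eventually (\<lambda>w. rinf - ((1 - w/(1+w))*rinf^2 + (1 - w/(3+w))) \<le> rw w) at_top"
    using large
  proof eventually_elim
    case (elim w)
    have "w/(1+w) \<le> 1" "w/(3+w) \<le> 1" using sqrt_3_less_imp_pos[OF elim] by simp_all
    then show ?case
      using rw_root[OF elim] rinf_root
        cubic_root_perturb[of "w/(1+w)" 1 "w/(3+w)" 1 "rw w" rinf] by simp
  qed
  show "eventually (\<lambda>w. rw w \<le> rinf) at_top"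
    using large
  proof eventually_elim
    case (elim w)
    have "w/(1+w) \<le> 1" "w/(3+w) < 1" using sqrt_3_less_imp_pos[OF elim] by simp_all
    then show ?case
      using rw_root[OF elim] rinf_root
        cubic_root_less[of "w/(1+w)" 1 "w/(3+w)" 1 "rw w" rinf] by simp
  qed
  have "((\<lambda>w::real. w/(1+w)) \<longlongrightarrow> 1) at_top" "((\<lambda>w::real. w/(3+w)) \<longlongrightarrow> 1) at_top"
    by real_asymp+
  then have "((\<lambda>w. rinf - ((1 - w/(1+w))*rinf^2 + (1 - w/(3+w)))) \<longlongrightarrow>
      rinf - ((1 - 1)*rinf^2 + (1 - 1))) at_top"
    by (intro tendsto_intros)
  then show "((\<lambda>w. rinf - ((1 - w/(1+w))*rinf^2 + (1 - w/(3+w)))) \<longlongrightarrow> rinf) at_top"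
    by simp
qed simp

lemma U_eq_circle:
  assumes "0 < s" "sqrt 3 < w"
  shows "U s w = {x. x$3 = 0 \<and> (x$1)^2 + (x$2)^2 = (rw w)^2}"
proof (intro set_eqI)
  fix x :: "real^3"
  have "x \<in> U s w \<longleftrightarrow> 1 < norm x \<and> x$3 = 0 \<and> norm x^3 - (w/(1+w))*norm x^2 - w/(3+w) = 0"
    by (rule mem_U_iff[OF assms(1) sqrt_3_less_imp_pos[OF assms(2)]])
  also have "\<dots> \<longleftrightarrow> x$3 = 0 \<and> norm x = rw w"
    using rw_eqI[OF assms(2), of "norm x"] rw_root[OF assms(2)] by auto
  also have "norm x = rw w \<longleftrightarrow> (norm x)^2 = (rw w)^2"
    using rw_root[OF assms(2)] by (simp add: power2_eq_iff_nonneg)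
  finally show "x \<in> U s w \<longleftrightarrow> x \<in> {x. x$3 = 0 \<and> (x$1)^2 + (x$2)^2 = (rw w)^2}"
    using norm_vec3_power2[of x] by auto
qed

lemma U_empty:
  assumes "0 < s" "0 < w" "w \<le> sqrt 3"
  shows "U s w = {}"
proof -
  have "w/(1+w) \<le> 1" using assms(2) by simp
  moreover have "\<not> 1 < w/(1+w) + w/(3+w)"
    using coeff_sum_gt_1_iff[OF assms(2)] assms(3) by simp
  ultimately have "\<not> (\<exists>r>1. r^3 - (w/(1+w))*r^2 - w/(3+w) = 0)"
    using cubic_root_gt_1_iff by blast
  then show ?thesis
    using mem_U_iff[OF assms(1,2)] by auto
qed

theorem proposition3p1:
  fixes s :: real
  assumes "s > 0"
  shows "(\<forall>w>sqrt 3. (\<exists>!r. r > 1 \<and> r^3 - (w / (1 + w)) * r^2 - w / (3 + w) = 0)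
            \<and> U s w = {x. x$3 = 0 \<and> (x$1)^2 + (x$2)^2 = (rw w)^2})
   \<and> strict_mono_on {sqrt 3<..} rw
   \<and> (rw \<longlongrightarrow> 1) (at_right (sqrt 3))
   \<and> (\<exists>!r::real. r > 1 \<and> r^3 - r^2 - 1 = 0) \<and> rinf > 1 \<and> \<bar>rinf - 1.47\<bar> < 0.005
   \<and> (rw \<longlongrightarrow> rinf) at_top
   \<and> (\<forall>w. 0 < w \<and> w \<le> sqrt 3 \<longrightarrow> U s w = {})"
proof (intro conjI allI impI)
  fix w :: real
  assume "sqrt 3 < w"
  show "\<exists>!r. r > 1 \<and> r^3 - (w / (1 + w)) * r^2 - w / (3 + w) = 0"
    using rw_ex1[OF \<open>sqrt 3 < w\<close>] .
  show "U s w = {x. x$3 = 0 \<and> (x$1)^2 + (x$2)^2 = (rw w)^2}"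
    using U_eq_circle[OF assms \<open>sqrt 3 < w\<close>] .
next
  show "rinf > 1" using rinf_root by simp
  show "\<bar>rinf - 1.47\<bar> < 0.005" using rinf_bounds unfolding abs_less_iff by simp
next
  fix w :: real
  assume "0 < w \<and> w \<le> sqrt 3"
  then show "U s w = {}" using U_empty assms by blast
qed (fact strict_mono_on_rw rw_tendsto_1 rinf_ex1 rw_tendsto_rinf)+

end
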